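(* Let $N\ge1$ be an integer, $\sigma^2>0$, $R>0$, $\gamma>0$ and $\alpha\in(0,1]$. Consider the problem $$\min_{p_0,\dots,p_{N-1}\ge0}\ \frac{\gamma}{N}\sum_{n=0}^{N-1}p_n^{\alpha}\quad\text{s.t.}\quad \frac1N\sum_{n=0}^{N-1}\log_2\!\left(1+\frac{p_n}{\sigma^2}\right)=R.$$ Then every optimal solution allocates equal power to all active slots: for all $n,n'$, if $p_n>0$ and $p_{n'}>0$ then $p_n=p_{n'}$. *)

theory Defs
  imports "HOL-Analysis.Analysis"
begin

definition feasible :: "nat \<Rightarrow> real \<Rightarrow> real \<Rightarrow> (nat \<Rightarrow> real) \<Rightarrow> bool" where
  "feasible N sigma2 R p \<longleftrightarrow>
     (\<forall>n<N. p n \<ge> 0) \<and>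
     (1 / real N) * (\<Sum>n<N. log 2 (1 + p n / sigma2)) = R"

definition objective :: "nat \<Rightarrow> real \<Rightarrow> real \<Rightarrow> (nat \<Rightarrow> real) \<Rightarrow> real" where
  "objective N gamma alpha p = (gamma / real N) * (\<Sum>n<N. p n powr alpha)"

definition optimal :: "nat \<Rightarrow> real \<Rightarrow> real \<Rightarrow> real \<Rightarrow> real \<Rightarrow> (nat \<Rightarrow> real) \<Rightarrow> bool" where
  "optimal N sigma2 R gamma alpha p \<longleftrightarrow>
     feasible N sigma2 R p \<and>
     (\<forall>q. feasible N sigma2 R q \<longrightarrow> objective N gamma alpha p \<le> objective N gamma alpha q)"

end

theory Submission
  imports Defs
begin

text \<open>Suppose two active slots n, n' had unequal powers. Normalising the noise, write their rates
as x and s - x, so that their joint cost is G x = (e^x - 1)^\<alpha> + (e^(s - x) - 1)^\<alpha> while the total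
rate s stays fixed. If x were a minimum of G on [0, s], it would be an interior critical point,
i.e. the two marginal costs y^(\<alpha> - 1) (1 + y) (with y = e^x - 1) would agree at unequal powers a, b.
In the variable w = 1/y the logarithm of the marginal cost, ln (1 + w) - \<alpha> ln w, decreases and then
increases, and it rises more slowly to the right of its minimum \<alpha>/(1 - \<alpha>) than to the left, so
equal values force 1/a + 1/b > 2\<alpha>/(1 - \<alpha>). That inequality says exactly G'' x < 0, so x is not
a minimum after all: moving rate between the two slots lowers the cost at equal total rate.\<close>

context
  fixes \<alpha> :: real
  assumes \<alpha>: "0 < \<alpha>" "\<alpha> < 1"
begin

definition log_marginal_cost :: "real \<Rightarrow> real" where
  "log_marginal_cost w = ln (1 + w) - \<alpha> * ln w"

definition log_marginal_cost' :: "real \<Rightarrow> real" where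
  "log_marginal_cost' w = (1 - \<alpha>) * (w - \<alpha> / (1 - \<alpha>)) / (w * (1 + w))"

lemma log_marginal_cost_inverse:
  assumes "0 < y"
  shows "log_marginal_cost (1 / y) = ln (y powr (\<alpha> - 1) * (1 + y))"
proof -
  have "1 + 1 / y = (1 + y) / y" using assms by (simp add: field_simps)
  then have "ln (1 + 1 / y) = ln (1 + y) - ln y"
    using assms by (simp add: ln_div)
  moreover have "ln (y powr (\<alpha> - 1) * (1 + y)) = (\<alpha> - 1) * ln y + ln (1 + y)"
    using assms by (simp add: ln_mult ln_powr)
  ultimately show ?thesis
    using assms by (simp add: log_marginal_cost_def ln_div algebra_simps)
qed

lemma has_real_derivative_log_marginal_cost:
  assumes "0 < w"
  shows "(log_marginal_cost has_real_derivative log_marginal_cost' w) (at w)"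
proof -
  have "(log_marginal_cost has_real_derivative 1 / (1 + w) - \<alpha> / w) (at w)"
    unfolding log_marginal_cost_def[abs_def] using assms
    by (auto intro!: derivative_eq_intros)
  moreover have "(1 - \<alpha>) * (w - \<alpha> / (1 - \<alpha>)) = w - \<alpha> * (1 + w)"
    using \<alpha> by (simp add: field_simps)
  then have "1 / (1 + w) - \<alpha> / w = log_marginal_cost' w"
    using assms by (simp add: log_marginal_cost'_def field_simps)
  ultimately show ?thesis by simp
qed

lemma log_marginal_cost_continuous_on:
  assumes "0 < a"
  shows "continuous_on {a..b} log_marginal_cost"
proof (rule DERIV_continuous_on)
  fix x assume "x \<in> {a..b}"
  with assms show "(log_marginal_cost has_real_derivative log_marginal_cost' x) (at x within {a..b})"
    by (intro has_field_derivative_at_within[OF has_real_derivative_log_marginal_cost]) simp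
qed

lemma log_marginal_cost_strict_antimono:
  assumes "0 < v" "v < w" "w \<le> \<alpha> / (1 - \<alpha>)"
  shows "log_marginal_cost w < log_marginal_cost v"
proof (rule DERIV_neg_imp_decreasing_open[OF \<open>v < w\<close> _ log_marginal_cost_continuous_on])
  fix x assume x: "v < x" "x < w"
  have "log_marginal_cost' x < 0"
    using x assms \<alpha> by (auto simp: log_marginal_cost'_def intro!: mult_pos_neg divide_neg_pos)
  then show "\<exists>y. (log_marginal_cost has_real_derivative y) (at x) \<and> y < 0"
    using has_real_derivative_log_marginal_cost[of x] x assms by auto
qed (fact assms)

lemma log_marginal_cost_strict_mono:
  assumes "\<alpha> / (1 - \<alpha>) \<le> v" "v < w"
  shows "log_marginal_cost v < log_marginal_cost w"
proof -
  have "0 < v" using assms \<alpha> by (smt (verit) divide_pos_pos)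
  show ?thesis
  proof (rule DERIV_pos_imp_increasing_open[OF \<open>v < w\<close> _ log_marginal_cost_continuous_on[OF \<open>0 < v\<close>]])
    fix x assume x: "v < x" "x < w"
    have "0 < log_marginal_cost' x"
      using x assms \<alpha> \<open>0 < v\<close> by (simp add: log_marginal_cost'_def)
    then show "\<exists>y. (log_marginal_cost has_real_derivative y) (at x) \<and> y > 0"
      using has_real_derivative_log_marginal_cost[of x] x \<open>0 < v\<close> by auto
  qed
qed

lemma log_marginal_cost'_reflect_neg:
  assumes "0 < t" "t < \<alpha> / (1 - \<alpha>)"
  shows "log_marginal_cost' (\<alpha> / (1 - \<alpha>) + t) + log_marginal_cost' (\<alpha> / (1 - \<alpha>) - t) < 0"
proof -
  define c where "c = \<alpha> / (1 - \<alpha>)"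
  have "t < c" using assms by (simp add: c_def)
  have "(c - t) * (1 + (c - t)) < (c + t) * (1 + (c + t))"
    using assms \<open>t < c\<close> by (simp add: algebra_simps add_pos_pos)
  then have "t / ((c + t) * (1 + (c + t))) < t / ((c - t) * (1 + (c - t)))"
    using assms \<open>t < c\<close> by (intro divide_strict_left_mono) auto
  then have "(1 - \<alpha>) * (t / ((c + t) * (1 + (c + t))))
      < (1 - \<alpha>) * (t / ((c - t) * (1 + (c - t))))"
    using \<alpha> by (intro mult_strict_left_mono) auto
  moreover have "log_marginal_cost' (c + t) = (1 - \<alpha>) * (t / ((c + t) * (1 + (c + t))))"
    and "log_marginal_cost' (c - t) = - ((1 - \<alpha>) * (t / ((c - t) * (1 + (c - t)))))"
    by (simp_all add: log_marginal_cost'_def c_def)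
  ultimately show ?thesis unfolding c_def by linarith
qed

lemma log_marginal_cost_asymmetric:
  assumes "0 < e" "e < \<alpha> / (1 - \<alpha>)"
  shows "log_marginal_cost (\<alpha> / (1 - \<alpha>) + e) < log_marginal_cost (\<alpha> / (1 - \<alpha>) - e)"
proof -
  define c where "c = \<alpha> / (1 - \<alpha>)"
  define H where "H t = log_marginal_cost (c + t) - log_marginal_cost (c - t)" for t
  have deriv: "(H has_real_derivative log_marginal_cost' (c + t) + log_marginal_cost' (c - t)) (at t)"
    if "0 \<le> t" "t < c" for t
  proof -
    note k' = has_real_derivative_log_marginal_cost
    have "((\<lambda>t. log_marginal_cost (c + t)) has_real_derivative log_marginal_cost' (c + t) * 1) (at t)"
      using that \<alpha> by (intro DERIV_chain2[where g = "\<lambda>t. c + t", OF k'] derivative_eq_intros)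
        (auto simp: c_def)
    moreover have "((\<lambda>t. log_marginal_cost (c - t))
        has_real_derivative log_marginal_cost' (c - t) * (- 1)) (at t)"
      using that by (intro DERIV_chain2[where g = "\<lambda>t. c - t", OF k'] derivative_eq_intros) auto
    ultimately show ?thesis
      unfolding H_def[abs_def] using DERIV_diff by fastforce
  qed
  have "H e < H 0"
  proof (rule DERIV_neg_imp_decreasing_open[OF \<open>0 < e\<close>])
    fix t assume t: "0 < t" "t < e"
    with assms have "log_marginal_cost' (c + t) + log_marginal_cost' (c - t) < 0"
      unfolding c_def by (intro log_marginal_cost'_reflect_neg) auto
    with deriv[of t] t assms show "\<exists>y. (H has_real_derivative y) (at t) \<and> y < 0"
      by (auto simp: c_def)
  next
    show "continuous_on {0..e} H"
    proof (rule DERIV_continuous_on)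
      fix t assume "t \<in> {0..e}"
      with assms show "(H has_field_derivative log_marginal_cost' (c + t) + log_marginal_cost' (c - t))
          (at t within {0..e})"
        by (intro has_field_derivative_at_within[OF deriv]) (simp_all add: c_def)
    qed
  qed
  then show ?thesis by (simp add: H_def c_def)
qed

lemma log_marginal_cost_eq_imp_sum_gt:
  assumes "0 < v" "v < w" "log_marginal_cost v = log_marginal_cost w"
  shows "2 * (\<alpha> / (1 - \<alpha>)) < v + w"
proof (rule ccontr)
  define c where "c = \<alpha> / (1 - \<alpha>)"
  assume "\<not> 2 * (\<alpha> / (1 - \<alpha>)) < v + w"
  then have sum: "v + w \<le> 2 * c" by (simp add: c_def)
  have "v < c"
  proof (rule ccontr)
    assume "\<not> v < c"
    then have "log_marginal_cost v < log_marginal_cost w"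
      using assms(2) by (intro log_marginal_cost_strict_mono) (simp add: c_def)
    then show False using assms(3) by simp
  qed
  have "c < w"
  proof (rule ccontr)
    assume "\<not> c < w"
    then have "log_marginal_cost w < log_marginal_cost v"
      using assms(1,2) by (intro log_marginal_cost_strict_antimono) (simp_all add: c_def)
    then show False using assms(3) by simp
  qed
  have "log_marginal_cost w \<le> log_marginal_cost (c + (c - v))"
  proof (cases "w = c + (c - v)")
    case False
    then have "w < c + (c - v)" using sum by simp
    then show ?thesis
      using \<open>c < w\<close> by (intro less_imp_le log_marginal_cost_strict_mono) (simp_all add: c_def)
  qed simp
  also have "\<dots> < log_marginal_cost (c - (c - v))"
    unfolding c_def using \<open>v < c\<close> assms(1)
    by (intro log_marginal_cost_asymmetric) (simp_all add: c_def)
  finally show False using assms(3) by simp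
qed

end

lemma marginal_cost_eq_imp_inverse_sum_gt:
  fixes \<alpha> a b :: real
  assumes "0 < \<alpha>" "\<alpha> \<le> 1" "0 < a" "0 < b" "a \<noteq> b"
    and "a powr (\<alpha> - 1) * (1 + a) = b powr (\<alpha> - 1) * (1 + b)"
  shows "2 * \<alpha> < (1 - \<alpha>) * (1 / a + 1 / b)"
proof (cases "\<alpha> = 1")
  case True
  then show ?thesis using assms by simp
next
  case False
  then have \<alpha>: "0 < \<alpha>" "\<alpha> < 1" using assms by auto
  have ln_eq: "log_marginal_cost \<alpha> (1 / a) = log_marginal_cost \<alpha> (1 / b)"
    using assms(6) by (simp add: log_marginal_cost_inverse[OF \<alpha>] assms(3,4))
  have "2 * (\<alpha> / (1 - \<alpha>)) < 1 / a + 1 / b"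
  proof (cases "a < b")
    case True
    have "1 / b < 1 / a" by (rule frac_less2[OF zero_less_one order.refl assms(3) True])
    from log_marginal_cost_eq_imp_sum_gt[OF \<alpha> _ this ln_eq[symmetric]]
    show ?thesis using assms(4) by simp
  next
    case False
    then have "b < a" using assms(5) by simp
    then have "1 / a < 1 / b" by (rule frac_less2[OF zero_less_one order.refl assms(4)])
    from log_marginal_cost_eq_imp_sum_gt[OF \<alpha> _ this ln_eq]
    show ?thesis using assms(3) by simp
  qed
  then have "(1 - \<alpha>) * (2 * (\<alpha> / (1 - \<alpha>))) < (1 - \<alpha>) * (1 / a + 1 / b)"
    using \<alpha> by (intro mult_strict_left_mono) auto
  then show ?thesis using \<alpha> by simp
qed

lemma critical_point_second_deriv_neg_imp_less:
  fixes f f' :: "real \<Rightarrow> real"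
  assumes "0 < r"
    and deriv: "\<And>y. t \<le> y \<Longrightarrow> y < t + r \<Longrightarrow> (f has_real_derivative f' y) (at y)"
    and "f' t = 0" and "(f' has_real_derivative d) (at t)" and "d < 0"
  shows "\<exists>s\<in>{t<..<t + r}. f s < f t"
proof -
  obtain \<delta> where "\<delta> > 0" and \<delta>: "\<And>h. 0 < h \<Longrightarrow> h < \<delta> \<Longrightarrow> f' (t + h) < 0"
    using DERIV_neg_dec_right[OF assms(4,5)] \<open>f' t = 0\<close> by metis
  define s where "s = t + min \<delta> r / 2"
  have s: "t < s" "s < t + r" "s - t < \<delta>"
    using \<open>0 < r\<close> \<open>\<delta> > 0\<close> by (auto simp: s_def)
  have "f s < f t"
  proof (rule DERIV_neg_imp_decreasing_open[OF \<open>t < s\<close>])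
    fix y assume "t < y" "y < s"
    then show "\<exists>z. (f has_real_derivative z) (at y) \<and> z < 0"
      using deriv[of y] \<delta>[of "y - t"] s by (intro exI[where x = "f' y"]) auto
  next
    show "continuous_on {t..s} f"
    proof (rule DERIV_continuous_on)
      fix y assume "y \<in> {t..s}"
      with s show "(f has_real_derivative f' y) (at y within {t..s})"
        by (intro has_field_derivative_at_within[OF deriv]) auto
    qed
  qed
  then show ?thesis using s by auto
qed

definition rate_cost :: "real \<Rightarrow> real \<Rightarrow> real" where
  "rate_cost \<alpha> x = (exp x - 1) powr \<alpha>"

definition marginal_rate_cost :: "real \<Rightarrow> real \<Rightarrow> real" where
  "marginal_rate_cost \<alpha> x = (exp x - 1) powr (\<alpha> - 1) * exp x"

lemma has_real_derivative_rate_cost: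
  assumes "0 < x"
  shows "(rate_cost \<alpha> has_real_derivative \<alpha> * marginal_rate_cost \<alpha> x) (at x)"
  unfolding rate_cost_def[abs_def] marginal_rate_cost_def using assms
  by (auto intro!: derivative_eq_intros)

lemma has_real_derivative_marginal_rate_cost:
  assumes "0 < x"
  shows "(marginal_rate_cost \<alpha> has_real_derivative
            marginal_rate_cost \<alpha> x * (\<alpha> - (1 - \<alpha>) / (exp x - 1))) (at x)"
proof -
  define u where "u = exp x - 1"
  have u: "0 < u" "exp x = u + 1" using assms by (simp_all add: u_def)
  have "(marginal_rate_cost \<alpha> has_real_derivative
      (\<alpha> - 1) * (exp x - 1) powr (\<alpha> - 1 - 1) * exp x * exp x + (exp x - 1) powr (\<alpha> - 1) * exp x) (at x)"
    unfolding marginal_rate_cost_def[abs_def] using assms by (auto intro!: derivative_eq_intros)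
  moreover have "u powr (\<alpha> - 1 - 1) = u powr (\<alpha> - 1) / u"
    using u powr_diff[of u "\<alpha> - 1" 1] by (simp only: powr_one)
  moreover have "(\<alpha> - 1) * (u powr (\<alpha> - 1) / u) * (u + 1) * (u + 1) + u powr (\<alpha> - 1) * (u + 1)
      = u powr (\<alpha> - 1) * (u + 1) * (\<alpha> - (1 - \<alpha>) / u)"
    using u by (simp add: field_simps)
  ultimately show ?thesis
    unfolding marginal_rate_cost_def u_def[symmetric] u(2) by simp
qed

lemma marginal_rate_cost_eq_imp_deriv_sum_neg:
  assumes "0 < \<alpha>" "\<alpha> \<le> 1" "0 < x" "0 < x'" "x \<noteq> x'"
    and eq: "marginal_rate_cost \<alpha> x = marginal_rate_cost \<alpha> x'"
  shows "marginal_rate_cost \<alpha> x * (\<alpha> - (1 - \<alpha>) / (exp x - 1))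
       + marginal_rate_cost \<alpha> x' * (\<alpha> - (1 - \<alpha>) / (exp x' - 1)) < 0"
proof -
  define a b where "a = exp x - 1" and "b = exp x' - 1"
  have ab: "0 < a" "0 < b" "a \<noteq> b" using assms by (auto simp: a_def b_def)
  have g_ab: "marginal_rate_cost \<alpha> x = a powr (\<alpha> - 1) * (1 + a)"
    "marginal_rate_cost \<alpha> x' = b powr (\<alpha> - 1) * (1 + b)"
    by (simp_all add: marginal_rate_cost_def a_def b_def)
  have "2 * \<alpha> < (1 - \<alpha>) * (1 / a + 1 / b)"
    using marginal_cost_eq_imp_inverse_sum_gt[OF assms(1,2) ab] eq g_ab by simp
  moreover have "0 < marginal_rate_cost \<alpha> x" using ab by (simp add: g_ab)
  moreover have "marginal_rate_cost \<alpha> x * (\<alpha> - (1 - \<alpha>) / (exp x - 1))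
       + marginal_rate_cost \<alpha> x' * (\<alpha> - (1 - \<alpha>) / (exp x' - 1))
      = marginal_rate_cost \<alpha> x * (2 * \<alpha> - (1 - \<alpha>) * (1 / a + 1 / b))"
    using eq by (simp add: a_def[symmetric] b_def[symmetric] algebra_simps)
  ultimately show ?thesis by (simp add: mult_pos_neg)
qed

lemma rate_split_not_minimal:
  assumes "0 < \<alpha>" "\<alpha> \<le> 1" "0 < x" "x < s" "x \<noteq> s - x"
  shows "\<exists>t\<in>{0..s}. rate_cost \<alpha> t + rate_cost \<alpha> (s - t) < rate_cost \<alpha> x + rate_cost \<alpha> (s - x)"
proof (rule ccontr)
  define G where "G t = rate_cost \<alpha> t + rate_cost \<alpha> (s - t)" for t
  define G' where "G' t = \<alpha> * (marginal_rate_cost \<alpha> t - marginal_rate_cost \<alpha> (s - t))" for t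
  define g' where "g' t = marginal_rate_cost \<alpha> t * (\<alpha> - (1 - \<alpha>) / (exp t - 1))" for t
  assume "\<not> ?thesis"
  then have min: "G x \<le> G t" if "t \<in> {0..s}" for t
    using that by (auto simp: G_def not_less)
  have dG: "(G has_real_derivative G' t) (at t)" if "0 < t" "t < s" for t
  proof -
    have "(G has_real_derivative \<alpha> * marginal_rate_cost \<alpha> t
        + \<alpha> * marginal_rate_cost \<alpha> (s - t) * - 1) (at t)"
      unfolding G_def[abs_def] using that
      by (intro DERIV_add has_real_derivative_rate_cost
          DERIV_chain2[where g = "\<lambda>t. s - t", OF has_real_derivative_rate_cost]
          derivative_eq_intros) auto
    then show ?thesis by (simp add: G'_def algebra_simps)
  qed
  have dG': "(G' has_real_derivative \<alpha> * (g' x + g' (s - x))) (at x)"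
  proof -
    have "(G' has_real_derivative \<alpha> * (g' x - g' (s - x) * - 1)) (at x)"
      unfolding G'_def[abs_def] g'_def using assms
      by (intro DERIV_cmult DERIV_diff has_real_derivative_marginal_rate_cost
          DERIV_chain2[where g = "\<lambda>t. s - t", OF has_real_derivative_marginal_rate_cost]
          derivative_eq_intros) auto
    then show ?thesis by simp
  qed
  have "G' x = 0"
  proof (rule DERIV_local_min[OF dG])
    show "0 < min x (s - x)" using assms by simp
    show "\<forall>y. \<bar>x - y\<bar> < min x (s - x) \<longrightarrow> G x \<le> G y"
      by (auto intro!: min)
  qed (use assms in auto)
  then have "marginal_rate_cost \<alpha> x = marginal_rate_cost \<alpha> (s - x)"
    using assms by (simp add: G'_def)
  then have "\<alpha> * (g' x + g' (s - x)) < 0"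
    using marginal_rate_cost_eq_imp_deriv_sum_neg[of \<alpha> x "s - x"] assms
    by (simp add: g'_def mult_pos_neg)
  then have "\<exists>t\<in>{x<..<x + (s - x)}. G t < G x"
    using \<open>G' x = 0\<close> assms
    by (intro critical_point_second_deriv_neg_imp_less[OF _ _ _ dG']) (auto intro: dG)
  then obtain t where "t \<in> {x<..<x + (s - x)}" "G t < G x" ..
  then show False using min[of t] assms(3) by auto
qed

lemma unequal_powers_improvable:
  fixes \<alpha> \<sigma> a b :: real
  assumes "0 < \<alpha>" "\<alpha> \<le> 1" "0 < \<sigma>" "0 < a" "0 < b" "a \<noteq> b"
  shows "\<exists>a' b'. 0 \<le> a' \<and> 0 \<le> b' \<and> (1 + a' / \<sigma>) * (1 + b' / \<sigma>) = (1 + a / \<sigma>) * (1 + b / \<sigma>)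
                \<and> a' powr \<alpha> + b' powr \<alpha> < a powr \<alpha> + b powr \<alpha>"
proof -
  define x s where "x = ln (1 + a / \<sigma>)" and "s = ln (1 + a / \<sigma>) + ln (1 + b / \<sigma>)"
  have pos: "0 < a / \<sigma>" "0 < b / \<sigma>" using assms by simp_all
  have exp_x: "exp x = 1 + a / \<sigma>" and exp_sx: "exp (s - x) = 1 + b / \<sigma>"
    using pos by (simp_all add: x_def s_def add_pos_pos)
  have "a / \<sigma> \<noteq> b / \<sigma>" using assms by simp
  then have "x \<noteq> s - x" using pos by (simp add: x_def s_def)
  moreover have "0 < x" "x < s" using pos by (simp_all add: x_def s_def)
  ultimately obtain t where t: "t \<in> {0..s}" and less: "(exp t - 1) powr \<alpha> + (exp (s - t) - 1) powr \<alpha>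
      < (exp x - 1) powr \<alpha> + (exp (s - x) - 1) powr \<alpha>"
    using rate_split_not_minimal[OF assms(1,2)] unfolding rate_cost_def by blast
  define a' b' where "a' = \<sigma> * (exp t - 1)" and "b' = \<sigma> * (exp (s - t) - 1)"
  have nonneg: "0 \<le> exp t - 1" "0 \<le> exp (s - t) - 1" using t by simp_all
  show ?thesis
  proof (intro exI conjI)
    show "0 \<le> a'" "0 \<le> b'" using nonneg assms by (simp_all add: a'_def b'_def)
    have "(1 + a' / \<sigma>) * (1 + b' / \<sigma>) = exp t * exp (s - t)"
      using assms by (simp add: a'_def b'_def)
    also have "\<dots> = exp x * exp (s - x)" by (simp flip: exp_add)
    finally show "(1 + a' / \<sigma>) * (1 + b' / \<sigma>) = (1 + a / \<sigma>) * (1 + b / \<sigma>)"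
      by (simp add: exp_x exp_sx)
    have scale: "(\<sigma> * u) powr \<alpha> = \<sigma> powr \<alpha> * u powr \<alpha>" if "0 \<le> u" for u
      using that assms by (simp add: powr_mult)
    have "a' powr \<alpha> + b' powr \<alpha>
        = \<sigma> powr \<alpha> * ((exp t - 1) powr \<alpha> + (exp (s - t) - 1) powr \<alpha>)"
      using nonneg by (simp add: a'_def b'_def scale distrib_left)
    also have "\<dots> < \<sigma> powr \<alpha> * ((exp x - 1) powr \<alpha> + (exp (s - x) - 1) powr \<alpha>)"
      using less assms by simp
    also have "\<dots> = a powr \<alpha> + b powr \<alpha>"
      using scale[of "a / \<sigma>"] scale[of "b / \<sigma>"] pos assms(3)
      by (simp add: exp_x exp_sx distrib_left)
    finally show "a' powr \<alpha> + b' powr \<alpha> < a powr \<alpha> + b powr \<alpha>" .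
  qed
qed

lemma sum_fun_upd2:
  fixes F :: "'b \<Rightarrow> 'c::comm_monoid_add"
  assumes "finite S" "n \<in> S" "n' \<in> S" "n \<noteq> n'"
  shows "(\<Sum>m\<in>S. F ((p(n := y, n' := y')) m)) + (F (p n) + F (p n'))
       = (\<Sum>m\<in>S. F (p m)) + (F y + F y')"
proof -
  have split: "sum h S = h n + (h n' + sum h (S - {n} - {n'}))" for h :: "'a \<Rightarrow> 'c"
    using assms by (simp add: sum.remove[of S n] sum.remove[of "S - {n}" n'])
  have "(\<Sum>m\<in>S - {n} - {n'}. F ((p(n := y, n' := y')) m)) = (\<Sum>m\<in>S - {n} - {n'}. F (p m))"
    by (rule sum.cong) auto
  then show ?thesis
    unfolding split[of "\<lambda>m. F ((p(n := y, n' := y')) m)"] split[of "\<lambda>m. F (p m)"]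
    using assms(4) by (simp add: ac_simps)
qed

lemma feasible_fun_upd2:
  assumes "feasible N \<sigma> R p" "n < N" "n' < N" "n \<noteq> n'" "0 < \<sigma>" "0 \<le> y" "0 \<le> y'"
    and "(1 + y / \<sigma>) * (1 + y' / \<sigma>) = (1 + p n / \<sigma>) * (1 + p n' / \<sigma>)"
  shows "feasible N \<sigma> R (p(n := y, n' := y'))"
proof -
  define F where "F v = log 2 (1 + v / \<sigma>)" for v
  have "0 \<le> p n" "0 \<le> p n'" using assms(1-3) by (auto simp: feasible_def)
  moreover have "F u + F v = log 2 ((1 + u / \<sigma>) * (1 + v / \<sigma>))" if "0 \<le> u" "0 \<le> v" for u v
  proof -
    have "0 < 1 + u / \<sigma>" "0 < 1 + v / \<sigma>"
      using that assms(5) by (simp_all add: add_pos_nonneg)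
    then show ?thesis by (simp add: F_def log_mult)
  qed
  ultimately have "F y + F y' = F (p n) + F (p n')"
    using assms(6-8) by simp
  then have "(\<Sum>m<N. F ((p(n := y, n' := y')) m)) = (\<Sum>m<N. F (p m))"
    using sum_fun_upd2[of "{..<N}" n n' F p y y'] assms(2-4) by simp
  then show ?thesis
    using assms(1,6,7) by (auto simp: feasible_def F_def)
qed

lemma objective_fun_upd2_less:
  assumes "0 < \<gamma>" "n < N" "n' < N" "n \<noteq> n'"
    and "y powr \<alpha> + y' powr \<alpha> < p n powr \<alpha> + p n' powr \<alpha>"
  shows "objective N \<gamma> \<alpha> (p(n := y, n' := y')) < objective N \<gamma> \<alpha> p"
proof -
  have "(\<Sum>m<N. (p(n := y, n' := y')) m powr \<alpha>) < (\<Sum>m<N. p m powr \<alpha>)"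
    using sum_fun_upd2[of "{..<N}" n n' "\<lambda>v. v powr \<alpha>" p y y'] assms(2-5) by simp
  moreover have "0 < \<gamma> / real N" using assms(1,2) by simp
  ultimately show ?thesis
    unfolding objective_def by (rule mult_strict_left_mono)
qed

theorem lemma3:
  fixes N :: nat and sigma2 R gamma alpha :: real and p :: "nat \<Rightarrow> real"
  assumes "N \<ge> 1" and "sigma2 > 0" and "R > 0" and "gamma > 0"
    and "0 < alpha" and "alpha \<le> 1"
    and "optimal N sigma2 R gamma alpha p"
  shows "\<forall>n<N. \<forall>n'<N. p n > 0 \<and> p n' > 0 \<longrightarrow> p n = p n'"
proof (intro allI impI, rule ccontr)
  fix n n' assume n: "n < N" "n' < N" and pos: "p n > 0 \<and> p n' > 0" and ne: "p n \<noteq> p n'"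
  have feas: "feasible N sigma2 R p"
    and opt: "\<And>q. feasible N sigma2 R q \<Longrightarrow> objective N gamma alpha p \<le> objective N gamma alpha q"
    using assms(7) by (auto simp: optimal_def)
  obtain y y' where y: "0 \<le> y" "0 \<le> y'"
    and same_rate: "(1 + y / sigma2) * (1 + y' / sigma2) = (1 + p n / sigma2) * (1 + p n' / sigma2)"
    and cheaper: "y powr alpha + y' powr alpha < p n powr alpha + p n' powr alpha"
    using unequal_powers_improvable[OF assms(5,6,2)] pos ne by blast
  have "n \<noteq> n'" using ne by auto
  then have "feasible N sigma2 R (p(n := y, n' := y'))"
    using feasible_fun_upd2[OF feas n _ assms(2) y same_rate] by simp
  moreover have "objective N gamma alpha (p(n := y, n' := y')) < objective N gamma alpha p"
    using objective_fun_upd2_less[OF assms(4) n \<open>n \<noteq> n'\<close> cheaper] .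
  ultimately show False using opt[of "p(n := y, n' := y')"] by simp
qed

end
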